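(* Let $G=(V,E)$ be a connected undirected graph whose vertices are labelled by distinct integers, and orient each edge $\{u,v\}\in E$ from $u$ to $v$ if $v>u$ (and from $v$ to $u$ otherwise). Fix a vertex $k\in V$ and let $H=(V',E')$ be the undirected graph with vertex set $V'=\{s,t\}\cup\{v_b : v\in V,\ b\in\{0,1,2\}\}$ and edge set $$E'=\{(u_b,v_{(b+1)\bmod 3}) : (u,v)\text{ a directed edge of }G,\ b\in\{0,1,2\}\}\cup\{(s,k_0),(t,k_1)\}.$$ Then there is a path from $s$ to $t$ in $H$ if and only if $G$ contains a cycle such that the difference $D:=p-q$ between its number $p$ of clockwise edges and its number $q$ of anticlockwise edges satisfies $D\not\equiv 0 \pmod 3$. Furthermore, if $k$ is a vertex on such a cycle, then the path between $s$ and $t$ in $H$ can be taken to have length at most $2c+2$, where $c$ is the length of the cycle.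
   Context: Clockwise/anticlockwise edges of a cycle in the oriented graph $G$: choose a vertex $v$ of the cycle having at least one outgoing edge (with respect to the orientation above) that belongs to the cycle, and traverse the cycle from $v$ back to $v$ starting along such an outgoing edge. An edge of the cycle is clockwise if its orientation agrees with the direction of traversal and anticlockwise otherwise. (The condition $D\not\equiv 0 \pmod 3$ does not depend on the traversal direction.) *)

theory Defs
  imports Main
begin

definition ugraph :: "'a set \<Rightarrow> 'a set set \<Rightarrow> bool" where
  "ugraph V E \<longleftrightarrow> (\<forall>e\<in>E. \<exists>u v. e = {u, v} \<and> u \<noteq> v \<and> u \<in> V \<and> v \<in> V)"

text \<open>Walk: nonempty vertex list, consecutive vertices adjacent. Length = number of edges.\<close>
definition is_walk :: "'a set \<Rightarrow> 'a set set \<Rightarrow> 'a list \<Rightarrow> bool" where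
  "is_walk V E xs \<longleftrightarrow> xs \<noteq> [] \<and> set xs \<subseteq> V \<and>
     (\<forall>i. i + 1 < length xs \<longrightarrow> {xs ! i, xs ! (i + 1)} \<in> E)"

definition is_path :: "'a set \<Rightarrow> 'a set set \<Rightarrow> 'a list \<Rightarrow> bool" where
  "is_path V E xs \<longleftrightarrow> is_walk V E xs \<and> distinct xs"

definition connected_graph :: "'a set \<Rightarrow> 'a set set \<Rightarrow> bool" where
  "connected_graph V E \<longleftrightarrow>
     (\<forall>u\<in>V. \<forall>v\<in>V. \<exists>xs. is_walk V E xs \<and> hd xs = u \<and> last xs = v)"

definition is_cycle :: "'a set \<Rightarrow> 'a set set \<Rightarrow> 'a list \<Rightarrow> bool" where
  "is_cycle V E cs \<longleftrightarrow> length cs \<ge> 3 \<and> distinct cs \<and> set cs \<subseteq> V \<and>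
     (\<forall>i<length cs. {cs ! i, cs ! ((i + 1) mod length cs)} \<in> E)"

text \<open>D = p - q for the traversal v_0 -> v_1 -> ... -> v_{n-1} -> v_0: an edge is
  clockwise iff it is oriented (from smaller to larger label) along the traversal.\<close>
definition cycle_D :: "int list \<Rightarrow> int" where
  "cycle_D cs = (\<Sum>i<length cs. if cs ! i < cs ! ((i + 1) mod length cs) then 1 else -1)"

datatype hvert = Src | Tgt | Cp int nat

definition H_verts :: "int set \<Rightarrow> hvert set" where
  "H_verts V = {Src, Tgt} \<union> {Cp v b | v b. v \<in> V \<and> b < 3}"

definition H_edges :: "int set set \<Rightarrow> int \<Rightarrow> hvert set set" where
  "H_edges E k = {{Cp u b, Cp v ((b + 1) mod 3)} | u v b. {u, v} \<in> E \<and> u < v \<and> b < 3}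
     \<union> {{Src, Cp k 0}, {Tgt, Cp k 1}}"

end

theory Submission
  imports Defs
begin

text \<open>Giving each edge of G the voltage +1 along its orientation and -1 against it, H minus
  s and t is the 3-fold cyclic cover of G: walks in H starting in layer 0 at k correspond to walks
  in G starting at k, and the layer reached is D mod 3, where D is the total voltage of the walk.
  Hence s and t are connected in H iff G has a closed walk at k with D = 1 (mod 3).
  A closed walk with D \<noteq> 0 (mod 3) splits at a repeated vertex into two shorter closed walks
  whose voltages add up, and a back-and-forth walk along one edge has voltage 0, so some simple
  cycle has D \<noteq> 0 (mod 3). Conversely a cycle read from one of its vertices is a closed walk
  with the same D; by connectivity it can be conjugated by a walk from k without changing D, and
  reversing the walk turns D = 2 into D = 1 (mod 3). When k lies on the cycle no conjugation is
  needed, so the path in H has at most c + 2 edges.\<close>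

definition orient :: "'a::linorder \<Rightarrow> 'a \<Rightarrow> int" where
  "orient x y = (if x < y then 1 else -1)"

lemma orient_swap: "x \<noteq> y \<Longrightarrow> orient y x = - orient x y"
  by (auto simp: orient_def)

fun walk_D :: "'a::linorder list \<Rightarrow> int" where
  "walk_D (x # y # xs) = orient x y + walk_D (y # xs)"
| "walk_D _ = 0"

text \<open>Not a simp rule: its right-hand side contains an instance of its left-hand side.\<close>

lemma walk_D_append_Cons: "walk_D (xs @ y # ys) = walk_D (xs @ [y]) + walk_D (y # ys)"
  by (induction xs rule: walk_D.induct) auto

lemma walk_D_rev: "distinct_adj xs \<Longrightarrow> walk_D (rev xs) = - walk_D xs"
proof (induction xs rule: walk_D.induct)
  case (1 x y xs)
  have "walk_D (rev (x # y # xs)) = walk_D (rev (y # xs)) + orient y x"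
    using walk_D_append_Cons[of "rev xs" y "[x]"] by simp
  then show ?case using 1 orient_swap[of x y] by simp
qed auto

lemma walk_D_conv_sum: "walk_D xs = (\<Sum>i < length xs - 1. orient (xs ! i) (xs ! Suc i))"
  by (induction xs rule: walk_D.induct) (simp_all add: sum.lessThan_Suc_shift del: sum.lessThan_Suc)

lemma nth_append_hd:
  assumes "i < length cs"
  shows "(cs @ [hd cs]) ! i = cs ! i" "(cs @ [hd cs]) ! Suc i = cs ! (Suc i mod length cs)"
proof -
  show "(cs @ [hd cs]) ! i = cs ! i" using assms by (simp add: nth_append)
  show "(cs @ [hd cs]) ! Suc i = cs ! (Suc i mod length cs)"
  proof (cases "Suc i < length cs")
    case False
    then have "Suc i = length cs" using assms by simp
    then show ?thesis by (cases cs) (simp_all add: nth_append)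
  qed (simp add: nth_append)
qed

lemma cycle_D_conv_walk_D: "cs \<noteq> [] \<Longrightarrow> cycle_D cs = walk_D (cs @ [hd cs])"
  unfolding cycle_D_def walk_D_conv_sum
  by (rule sum.cong) (simp_all add: nth_append_hd orient_def)

abbreviation edge_walk :: "'a set set \<Rightarrow> 'a list \<Rightarrow> bool" where
  "edge_walk E \<equiv> successively (\<lambda>x y. {x, y} \<in> E)"

lemma is_walk_iff: "is_walk V E xs \<longleftrightarrow> xs \<noteq> [] \<and> set xs \<subseteq> V \<and> edge_walk E xs"
  unfolding is_walk_def successively_conv_nth by auto

lemma is_walk_rev [simp]: "is_walk V E (rev xs) \<longleftrightarrow> is_walk V E xs"
  by (simp add: is_walk_iff insert_commute)

lemma edge_walk_append_hd_iff:
  "edge_walk E (cs @ [hd cs]) \<longleftrightarrow> (\<forall>i<length cs. {cs ! i, cs ! (Suc i mod length cs)} \<in> E)"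
  unfolding successively_conv_nth by (simp add: nth_append_hd del: mod_Suc)

lemma is_cycle_iff: "is_cycle V E cs \<longleftrightarrow> 3 \<le> length cs \<and> distinct cs \<and> is_walk V E (cs @ [hd cs])"
proof (cases "cs = []")
  case False
  then show ?thesis
    unfolding is_cycle_def is_walk_iff edge_walk_append_hd_iff by auto
qed (simp add: is_cycle_def)

lemma ugraph_edgeD: "ugraph V E \<Longrightarrow> {x, y} \<in> E \<Longrightarrow> x \<noteq> y \<and> x \<in> V \<and> y \<in> V"
  unfolding ugraph_def by (fastforce simp: doubleton_eq_iff)

lemma distinct_adj_walk: "ugraph V E \<Longrightarrow> is_walk V E xs \<Longrightarrow> distinct_adj xs"
  unfolding distinct_adj_def is_walk_iff by (auto elim: successively_mono dest: ugraph_edgeD)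

definition closed_walk :: "'a set \<Rightarrow> 'a set set \<Rightarrow> 'a list \<Rightarrow> bool" where
  "closed_walk V E xs \<longleftrightarrow> is_walk V E xs \<and> hd xs = last xs"

lemma cycle_of_closed_walk:
  assumes "ugraph V E" "closed_walk V E xs" "\<not> m dvd walk_D xs"
  shows "\<exists>cs. is_cycle V E cs \<and> \<not> m dvd cycle_D cs"
  using assms(2,3)
proof (induction "length xs" arbitrary: xs rule: less_induct)
  case less
  then obtain cs l where xs: "xs = cs @ [l]" and walk: "is_walk V E xs" and hd: "hd xs = l"
    unfolding closed_walk_def is_walk_iff by (metis append_butlast_last_id)
  show ?case
  proof (cases "distinct cs")
    case False
    then obtain a y mid b where "cs = a @ [y] @ mid @ [y] @ b"
      using not_distinct_decomp by blast
    then have xs_split: "xs = a @ y # (mid @ y # b @ [l])" using xs by simp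
    define loop where "loop = y # mid @ [y]"
    define rest where "rest = a @ y # b @ [l]"
    have "walk_D xs = walk_D (a @ [y]) + walk_D (y # mid @ y # b @ [l])"
      unfolding xs_split by (rule walk_D_append_Cons)
    also have "walk_D (y # mid @ y # b @ [l]) = walk_D loop + walk_D (y # b @ [l])"
      using walk_D_append_Cons[of "y # mid" y "b @ [l]"] by (simp only: loop_def append_Cons)
    finally have "walk_D xs = walk_D (a @ [y]) + walk_D loop + walk_D (y # b @ [l])" by simp
    moreover have "walk_D rest = walk_D (a @ [y]) + walk_D (y # b @ [l])"
      unfolding rest_def by (rule walk_D_append_Cons)
    ultimately have "\<not> m dvd walk_D loop \<or> \<not> m dvd walk_D rest"
      using less.prems(2) by (metis add.assoc add.commute dvd_add)
    moreover have "closed_walk V E loop" "closed_walk V E rest"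
      using walk hd unfolding xs_split closed_walk_def loop_def rest_def
      by (auto simp: is_walk_iff successively_append_iff successively_Cons hd_append)
    moreover have "length loop < length xs" "length rest < length xs"
      unfolding xs_split loop_def rest_def by simp_all
    ultimately show ?thesis using less.hyps by blast
  next
    case True
    consider "3 \<le> length cs" | "cs = []" | x where "cs = [x]" | x z where "cs = [x, z]"
      by (cases cs rule: remdups_adj.cases; cases "tl (tl cs)") auto
    then show ?thesis
    proof cases
      case 1
      then have "cs \<noteq> []" by auto
      moreover have "l = hd cs" using hd \<open>cs \<noteq> []\<close> by (simp add: xs)
      ultimately have "is_cycle V E cs" "cycle_D cs = walk_D xs"
        using 1 True walk by (simp_all add: xs is_cycle_iff cycle_D_conv_walk_D)
      then show ?thesis using less.prems(2) by auto
    next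
      case 2
      then show ?thesis using less.prems(2) by (simp add: xs)
    next
      case (3 x)
      then have "{x, x} \<in> E" using walk hd by (simp add: xs is_walk_iff)
      then show ?thesis using ugraph_edgeD[OF assms(1)] by blast
    next
      case (4 x z)
      then have "{x, z} \<in> E" "l = x" using walk hd by (simp_all add: xs is_walk_iff)
      moreover have "x \<noteq> z" using ugraph_edgeD[OF assms(1) \<open>{x, z} \<in> E\<close>] by blast
      ultimately have "walk_D xs = 0" using orient_swap[of x z] by (simp add: xs 4)
      then show ?thesis using less.prems(2) by simp
    qed
  qed
qed

lemma walk_shortcut_path:
  assumes "is_walk V E xs"
  shows "\<exists>ys. is_path V E ys \<and> hd ys = hd xs \<and> last ys = last xs \<and> length ys \<le> length xs"
  using assms
proof (induction "length xs" arbitrary: xs rule: less_induct)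
  case less
  show ?case
  proof (cases "distinct xs")
    case True
    then show ?thesis using less.prems by (auto simp: is_path_def)
  next
    case False
    then obtain a y mid b where xs: "xs = a @ y # (mid @ y # b)"
      using not_distinct_decomp by fastforce
    have "is_walk V E (a @ y # b)" "length (a @ y # b) < length xs"
      using less.prems by (auto simp: xs is_walk_iff successively_append_iff successively_Cons)
    moreover have "hd (a @ y # b) = hd xs" "last (a @ y # b) = last xs"
      by (simp_all add: xs hd_append)
    ultimately show ?thesis using less.hyps by (metis le_less_trans less_imp_le)
  qed
qed

lemma closed_walk_of_cycle:
  assumes "is_cycle V E cs" "x \<in> set cs"
  obtains W where "closed_walk V E W" "hd W = x" "walk_D W = cycle_D cs" "length W = length cs + 1"
proof -
  obtain xs ys where cs: "cs = xs @ x # ys" using split_list assms(2) by metis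
  have walk: "is_walk V E (xs @ x # ys @ [hd cs])"
    and D: "cycle_D cs = walk_D (xs @ x # ys @ [hd cs])"
    using assms(1) by (simp_all add: is_cycle_iff cycle_D_conv_walk_D cs)
  define W where "W = x # ys @ xs @ [x]"
  have "closed_walk V E W \<and> walk_D W = cycle_D cs"
  proof (cases xs)
    case Nil
    then show ?thesis using walk D by (simp add: closed_walk_def W_def cs)
  next
    case (Cons h xs')
    have "walk_D W = walk_D (x # ys @ [h]) + walk_D (h # xs' @ [x])"
      using walk_D_append_Cons[of "x # ys" h "xs' @ [x]"] by (simp add: W_def Cons)
    also have "\<dots> = cycle_D cs"
      using D walk_D_append_Cons[of "h # xs'" x "ys @ [h]"] by (simp add: Cons cs)
    finally show ?thesis
      using walk by (auto simp: closed_walk_def W_def Cons cs is_walk_iff successively_append_iff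
          successively_Cons hd_append)
  qed
  moreover have "hd W = x" "length W = length cs + 1" by (simp_all add: W_def cs)
  ultimately show thesis using that by blast
qed

lemma closed_walk_rev: "closed_walk V E xs \<Longrightarrow> closed_walk V E (rev xs)"
  by (simp add: closed_walk_def hd_rev last_rev)

lemma closed_walk_conjugate:
  assumes "ugraph V E" "is_walk V E P" "closed_walk V E W" "last P = hd W"
  obtains C where "closed_walk V E C" "hd C = hd P" "walk_D C = walk_D W"
proof -
  define v where "v = hd W"
  obtain P' where P: "P = P' @ [v]"
    using assms(2,4) unfolding is_walk_iff v_def by (metis append_butlast_last_id)
  obtain W' where W: "W = W' @ [v]"
    using assms(3) unfolding closed_walk_def is_walk_iff v_def by (metis append_butlast_last_id)
  obtain W'' where W_Cons: "W = v # W''"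
    using assms(3) unfolding closed_walk_def is_walk_iff v_def by (metis list.collapse)
  define C where "C = P' @ W @ rev P'"
  have "walk_D C = walk_D P + walk_D (W @ rev P')"
    using walk_D_append_Cons[of P' v "W'' @ rev P'"] by (simp add: C_def P W_Cons)
  also have "walk_D (W @ rev P') = walk_D W + walk_D (rev P)"
    using walk_D_append_Cons[of W' v "rev P'"] by (simp add: W P)
  also have "walk_D (rev P) = - walk_D P"
    using walk_D_rev distinct_adj_walk[OF assms(1,2)] by blast
  finally have "walk_D C = walk_D W" by simp
  moreover have "closed_walk V E C" "hd C = hd P"
    using assms(2,3) W W_Cons
    by (auto simp: closed_walk_def C_def P is_walk_iff successively_append_iff successively_Cons
        hd_append last_append hd_rev last_rev insert_commute)
  ultimately show thesis using that by blast
qed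

lemma closed_walk_with_D_mod_3_eq_1:
  assumes "ugraph V E" "closed_walk V E W" "\<not> 3 dvd walk_D W"
  obtains W' where "closed_walk V E W'" "hd W' = hd W" "walk_D W' mod 3 = 1" "length W' = length W"
proof (cases "walk_D W mod 3 = 1")
  case False
  then have "walk_D W mod 3 = 2" using assms(3) by presburger
  moreover have "walk_D (rev W) = - walk_D W"
    using assms(1,2) walk_D_rev distinct_adj_walk unfolding closed_walk_def by blast
  ultimately have "walk_D (rev W) mod 3 = 1" by presburger
  moreover have "hd (rev W) = hd W" using assms(2) by (simp add: closed_walk_def hd_rev)
  ultimately show thesis using that closed_walk_rev[OF assms(2)] by simp
qed (use assms(2) that in blast)

lemma H_edges_Cp_iff:
  assumes "ugraph V E"
  shows "{Cp a c, Cp a' c'} \<in> H_edges E k \<longleftrightarrow>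
           {a, a'} \<in> E \<and> c < 3 \<and> int c' = (int c + orient a a') mod 3"
proof
  assume "{Cp a c, Cp a' c'} \<in> H_edges E k"
  then obtain u v b where uv: "{u, v} \<in> E" "u < v" "b < 3"
    and "{Cp a c, Cp a' c'} = {Cp u b, Cp v ((b + 1) mod 3)}"
    unfolding H_edges_def by (auto simp: doubleton_eq_iff)
  then consider "a = u" "c = b" "a' = v" "c' = (b + 1) mod 3"
    | "a = v" "c = (b + 1) mod 3" "a' = u" "c' = b"
    by (auto simp: doubleton_eq_iff)
  then show "{a, a'} \<in> E \<and> c < 3 \<and> int c' = (int c + orient a a') mod 3"
  proof cases
    case 1
    then show ?thesis using uv by (simp add: orient_def zmod_int add.commute)
  next
    case 2
    have "b = 0 \<or> b = 1 \<or> b = 2" using uv by auto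
    then show ?thesis using 2 uv by (auto simp: orient_def insert_commute)
  qed
next
  assume edge: "{a, a'} \<in> E \<and> c < 3 \<and> int c' = (int c + orient a a') mod 3"
  then have "a \<noteq> a'" using ugraph_edgeD[OF assms] by blast
  have c: "c = 0 \<or> c = 1 \<or> c = 2" using edge by auto
  show "{Cp a c, Cp a' c'} \<in> H_edges E k"
  proof (cases "a < a'")
    case True
    then have "c' = (c + 1) mod 3" using edge c by (auto simp: orient_def)
    then show ?thesis using True edge unfolding H_edges_def by blast
  next
    case False
    then have "a' < a" "c' < 3" "c = (c' + 1) mod 3"
      using edge c \<open>a \<noteq> a'\<close> by (auto simp: orient_def)
    moreover have "{a', a} \<in> E" using edge by (simp add: insert_commute)
    ultimately have "{Cp a' c', Cp a c} \<in> H_edges E k" unfolding H_edges_def by blast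
    then show ?thesis by (simp add: insert_commute)
  qed
qed

fun lift :: "int list \<Rightarrow> nat \<Rightarrow> hvert list" where
  "lift [] b = []"
| "lift [x] b = [Cp x b]"
| "lift (x # y # xs) b = Cp x b # lift (y # xs) (nat ((int b + orient x y) mod 3))"

lemma length_lift [simp]: "length (lift xs b) = length xs"
  by (induction xs b rule: lift.induct) auto

lemma lift_eq_Nil_iff [simp]: "lift xs b = [] \<longleftrightarrow> xs = []"
  by (metis length_lift length_0_conv)

lemma hd_lift: "xs \<noteq> [] \<Longrightarrow> hd (lift xs b) = Cp (hd xs) b"
  by (cases "(xs, b)" rule: lift.cases) auto

lemma last_lift:
  "xs \<noteq> [] \<Longrightarrow> b < 3 \<Longrightarrow> last (lift xs b) = Cp (last xs) (nat ((int b + walk_D xs) mod 3))"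
proof (induction xs b rule: lift.induct)
  case (3 x y xs b)
  have "(int (nat ((int b + orient x y) mod 3)) + walk_D (y # xs)) mod 3
      = (int b + walk_D (x # y # xs)) mod 3"
    by (simp add: mod_add_left_eq add.assoc)
  then show ?case using 3 by simp
qed auto

lemma set_lift_subset: "set xs \<subseteq> V \<Longrightarrow> b < 3 \<Longrightarrow> set (lift xs b) \<subseteq> H_verts V"
  by (induction xs b rule: lift.induct) (auto simp: H_verts_def)

lemma edge_walk_lift:
  "ugraph V E \<Longrightarrow> edge_walk E xs \<Longrightarrow> b < 3 \<Longrightarrow> edge_walk (H_edges E k) (lift xs b)"
  by (induction xs b rule: lift.induct) (auto simp: H_edges_Cp_iff hd_lift successively_Cons)

fun base :: "hvert \<Rightarrow> int" where "base (Cp v c) = v" | "base _ = 0"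
fun layer :: "hvert \<Rightarrow> nat" where "layer (Cp v c) = c" | "layer _ = 0"

lemma H_edge_base_layer:
  assumes "ugraph V E" "{z, z'} \<in> H_edges E k" "z \<notin> {Src, Tgt}" "z' \<notin> {Src, Tgt}"
  shows "{base z, base z'} \<in> E \<and> int (layer z') = (int (layer z) + orient (base z) (base z')) mod 3"
proof -
  obtain v c v' c' where "z = Cp v c" "z' = Cp v' c'"
    using assms(3,4) by (cases z; cases z') auto
  then show ?thesis using assms(2) H_edges_Cp_iff[OF assms(1)] by simp
qed

lemma edge_walk_map_base:
  assumes "ugraph V E" "edge_walk (H_edges E k) q" "Src \<notin> set q" "Tgt \<notin> set q"
  shows "edge_walk E (map base q)"
  unfolding successively_map using assms(2)
  by (rule successively_mono) (use assms H_edge_base_layer in blast)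

lemma layer_last_mod_3:
  assumes "ugraph V E" "edge_walk (H_edges E k) q" "Src \<notin> set q" "Tgt \<notin> set q" "q \<noteq> []"
  shows "int (layer (last q)) mod 3 = (int (layer (hd q)) + walk_D (map base q)) mod 3"
  using assms(2-)
proof (induction q rule: induct_list012)
  case (3 z z' zs)
  then have "int (layer z') = (int (layer z) + orient (base z) (base z')) mod 3"
    using H_edge_base_layer[OF assms(1)] by auto
  then have "(int (layer z') + walk_D (map base (z' # zs))) mod 3
      = (int (layer z) + walk_D (map base (z # z' # zs))) mod 3"
    by (simp add: mod_add_left_eq add.assoc)
  then show ?case using 3 by simp
qed auto

lemma H_path_of_closed_walk:
  assumes "ugraph V E" "closed_walk V E W" "hd W = k" "\<not> 3 dvd walk_D W"
  obtains p where "is_path (H_verts V) (H_edges E k) p" "hd p = Src" "last p = Tgt"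
    "length p \<le> length W + 2"
proof -
  obtain W' where W': "closed_walk V E W'" "hd W' = hd W" "walk_D W' mod 3 = 1"
    "length W' = length W"
    by (rule closed_walk_with_D_mod_3_eq_1[OF assms(1,2,4)])
  then have walk: "W' \<noteq> []" "set W' \<subseteq> V" "edge_walk E W'" "hd W' = k" "last W' = k"
    using assms(3) by (auto simp: closed_walk_def is_walk_iff)
  define q where "q = Src # lift W' 0 @ [Tgt]"
  have "hd (lift W' 0) = Cp k 0" "last (lift W' 0) = Cp k 1"
    using walk W'(3) by (simp_all add: hd_lift last_lift)
  then have "edge_walk (H_edges E k) q"
    using edge_walk_lift[OF assms(1) walk(3)] walk(1)
    by (auto simp: q_def successively_append_iff successively_Cons H_edges_def insert_commute)
  moreover have "set q \<subseteq> H_verts V"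
    using set_lift_subset[OF walk(2)] by (auto simp: q_def H_verts_def)
  ultimately have "is_walk (H_verts V) (H_edges E k) q" by (simp add: is_walk_iff q_def)
  then obtain p where "is_path (H_verts V) (H_edges E k) p" "hd p = hd q" "last p = last q"
    "length p \<le> length q"
    using walk_shortcut_path by blast
  then show thesis using that W'(4) by (simp add: q_def)
qed

lemma closed_walk_of_H_path:
  assumes "ugraph V E" "is_path (H_verts V) (H_edges E k) p" "hd p = Src" "last p = Tgt"
  obtains W where "closed_walk V E W" "hd W = k" "walk_D W mod 3 = 1"
proof -
  have p: "edge_walk (H_edges E k) p" "set p \<subseteq> H_verts V" "distinct p" "p \<noteq> []"
    using assms(2) by (auto simp: is_path_def is_walk_iff)
  obtain q where pq: "p = Src # q @ [Tgt]"
  proof -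
    have "p = Src # tl p" using p(4) assms(3) by (cases p) auto
    moreover have "tl p \<noteq> []" using calculation assms(4) by (metis hvert.distinct(1) last_ConsL)
    ultimately show thesis using that assms(4) by (metis append_butlast_last_id last_ConsR)
  qed
  have q: "Src \<notin> set q" "Tgt \<notin> set q" using p(3) pq by auto
  have "q \<noteq> []"
  proof
    assume "q = []"
    then have "{Src, Tgt} \<in> H_edges E k" using p(1) pq by simp
    then show False by (auto simp: H_edges_def doubleton_eq_iff)
  qed
  have "{Src, hd q} \<in> H_edges E k" "{last q, Tgt} \<in> H_edges E k" "edge_walk (H_edges E k) q"
    using p(1) \<open>q \<noteq> []\<close> by (auto simp: pq successively_append_iff successively_Cons)
  then have hd_q: "hd q = Cp k 0" and last_q: "last q = Cp k 1"
    and walk_q: "edge_walk (H_edges E k) q"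
    by (auto simp: H_edges_def doubleton_eq_iff)
  define W where "W = map base q"
  have "set W \<subseteq> V" using p(2) q by (auto simp: W_def pq H_verts_def)
  then have "closed_walk V E W" "hd W = k"
    using edge_walk_map_base[OF assms(1) walk_q q] hd_q last_q \<open>q \<noteq> []\<close>
    by (auto simp: closed_walk_def is_walk_iff W_def hd_map last_map)
  moreover have "walk_D W mod 3 = 1"
    using layer_last_mod_3[OF assms(1) walk_q q \<open>q \<noteq> []\<close>] hd_q last_q by (simp add: W_def)
  ultimately show thesis using that by blast
qed

theorem lemma1:
  fixes V :: "int set" and E :: "int set set" and k :: int
  assumes "finite V" and "ugraph V E" and "connected_graph V E" and "k \<in> V"
  shows "((\<exists>p. is_path (H_verts V) (H_edges E k) p \<and> hd p = Src \<and> last p = Tgt)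
            \<longleftrightarrow> (\<exists>cs. is_cycle V E cs \<and> cycle_D cs mod 3 \<noteq> 0))
         \<and> (\<forall>cs. is_cycle V E cs \<and> cycle_D cs mod 3 \<noteq> 0 \<and> k \<in> set cs \<longrightarrow>
              (\<exists>p. is_path (H_verts V) (H_edges E k) p \<and> hd p = Src \<and> last p = Tgt
                   \<and> length p - 1 \<le> 2 * length cs + 2))"
proof (intro conjI iffI allI impI)
  assume "\<exists>p. is_path (H_verts V) (H_edges E k) p \<and> hd p = Src \<and> last p = Tgt"
  then obtain p where "is_path (H_verts V) (H_edges E k) p" "hd p = Src" "last p = Tgt" by blast
  then obtain W where "closed_walk V E W" "walk_D W mod 3 = 1"
    by (rule closed_walk_of_H_path[OF assms(2)])
  then show "\<exists>cs. is_cycle V E cs \<and> cycle_D cs mod 3 \<noteq> 0"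
    using cycle_of_closed_walk[OF assms(2), of W 3] by (auto simp: dvd_eq_mod_eq_0)
next
  fix cs assume cs: "is_cycle V E cs \<and> cycle_D cs mod 3 \<noteq> 0 \<and> k \<in> set cs"
  then obtain W where W: "closed_walk V E W" "hd W = k" "walk_D W = cycle_D cs"
    "length W = length cs + 1"
    using closed_walk_of_cycle by blast
  then have "\<not> 3 dvd walk_D W" using cs by (simp add: dvd_eq_mod_eq_0)
  then obtain p where "is_path (H_verts V) (H_edges E k) p" "hd p = Src" "last p = Tgt"
    "length p \<le> length W + 2"
    by (rule H_path_of_closed_walk[OF assms(2) W(1,2)])
  then show "\<exists>p. is_path (H_verts V) (H_edges E k) p \<and> hd p = Src \<and> last p = Tgt
               \<and> length p - 1 \<le> 2 * length cs + 2"
    using W(4) by auto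
next
  assume "\<exists>cs. is_cycle V E cs \<and> cycle_D cs mod 3 \<noteq> 0"
  then obtain cs where cs: "is_cycle V E cs" "\<not> 3 dvd cycle_D cs"
    by (auto simp: dvd_eq_mod_eq_0)
  then have "hd cs \<in> set cs" by (auto simp: is_cycle_def intro!: hd_in_set)
  then obtain W where W: "closed_walk V E W" "hd W = hd cs" "walk_D W = cycle_D cs"
    using closed_walk_of_cycle[OF cs(1)] by blast
  have "hd W \<in> V" using cs(1) W(2) \<open>hd cs \<in> set cs\<close> by (auto simp: is_cycle_def)
  then obtain P where P: "is_walk V E P" "hd P = k" "last P = hd W"
    using assms(3,4) unfolding connected_graph_def by blast
  obtain C where C: "closed_walk V E C" "hd C = hd P" "walk_D C = walk_D W"
    by (rule closed_walk_conjugate[OF assms(2) P(1) W(1) P(3)])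
  have "hd C = k" "\<not> 3 dvd walk_D C" using C(2,3) P(2) W(3) cs(2) by simp_all
  then obtain p where "is_path (H_verts V) (H_edges E k) p" "hd p = Src" "last p = Tgt"
    by (rule H_path_of_closed_walk[OF assms(2) C(1)])
  then show "\<exists>p. is_path (H_verts V) (H_edges E k) p \<and> hd p = Src \<and> last p = Tgt" by blast
qed

end
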